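(* Consider the NEAR-DGD$^t$ iteration $\mathbf{x}_k=\mathbf{Z}^t\mathbf{y}_k$, $\mathbf{y}_{k+1}=\mathbf{x}_k-\alpha\nabla\mathbf{f}(\mathbf{x}_k)$, $k=0,1,2,\ldots$, with fixed integer $t\ge1$, started from $y_{i,0}=s_0$ for all $i$ (a common point $s_0\in\mathbb{R}^p$). Suppose each $f_i$ is $\mu_i$-strongly convex with $L_i$-Lipschitz gradient, and let $0<\alpha<1/L$ with $L=\max_iL_i$. Then for all $k=1,2,\ldots$, $$\|\mathbf{x}_k\|\le D,\qquad \|\mathbf{y}_k\|\le D,\qquad D=\|\mathbf{y}_0-\mathbf{u}^\star\|+\frac{\nu+4}{\nu}\|\mathbf{u}^\star\|,$$ where $\mathbf{u}^\star=(u_1^\star;\ldots;u_n^\star)$ with $u_i^\star=\arg\min f_i$, $\nu=2\alpha\gamma$, $\gamma=\min_i\gamma_i$, $\gamma_i=\frac{\mu_iL_i}{\mu_i+L_i}$. The same bounds hold for the NEAR-DGD$^+$ iteration $\mathbf{x}_k=\mathbf{Z}^{t(k)}\mathbf{y}_k$, $\mathbf{y}_{k+1}=\mathbf{x}_k-\alpha\nabla\mathbf{f}(\mathbf{x}_k)$ for any sequence of positive integers $t(k)$.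
   Context: $n$ agents with functions $f_i:\mathbb{R}^p\to\mathbb{R}$. $\mathbf{W}$ is a symmetric doubly-stochastic $n\times n$ matrix of a connected network ($w_{ii}>0$, $w_{ij}>0$ iff $i,j$ neighbours), simple eigenvalue $1$, other eigenvalues in $(-1,1)$. $\mathbf{Z}=\mathbf{W}\otimes I_p$. Vectors in $\mathbb{R}^{np}$ are concatenations $\mathbf{x}=(x_1;\ldots;x_n)$, and $\nabla\mathbf{f}(\mathbf{x})=(\nabla f_1(x_1);\ldots;\nabla f_n(x_n))$. *)

theory Defs
  imports "HOL-Analysis.Analysis"
begin

text \<open>Agents are indexed by a finite type 'n; local variables live in a Euclidean
space 'a (playing the role of R^p). Stacked vectors in R^{np} are functions 'n => 'a.\<close>

definition snorm :: "('n::finite \<Rightarrow> 'a::real_normed_vector) \<Rightarrow> real" where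
  "snorm x = sqrt (\<Sum>i\<in>UNIV. (norm (x i))\<^sup>2)"

text \<open>The consensus operator Z = W (Kronecker) I_p acting on stacked vectors.\<close>
definition Zop :: "real^'n^'n \<Rightarrow> ('n::finite \<Rightarrow> 'a::real_vector) \<Rightarrow> ('n \<Rightarrow> 'a)" where
  "Zop W x = (\<lambda>i. \<Sum>j\<in>UNIV. (W $ i $ j) *\<^sub>R x j)"

definition Zpow :: "real^'n^'n \<Rightarrow> nat \<Rightarrow> ('n::finite \<Rightarrow> 'a::real_vector) \<Rightarrow> ('n \<Rightarrow> 'a)" where
  "Zpow W t = (Zop W ^^ t)"

definition mixing_matrix :: "real^'n^'n \<Rightarrow> bool" where
  "mixing_matrix W \<longleftrightarrow>
     (\<forall>i j. W $ i $ j = W $ j $ i) \<and>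
     (\<forall>i j. W $ i $ j \<ge> 0) \<and>
     (\<forall>i. (\<Sum>j\<in>UNIV. W $ i $ j) = 1) \<and>
     (\<forall>j. (\<Sum>i\<in>UNIV. W $ i $ j) = 1) \<and>
     (\<forall>i. W $ i $ i > 0) \<and>
     (\<forall>i j. (i, j) \<in> {(a, b). a \<noteq> b \<and> W $ a $ b > 0}\<^sup>*) \<and>
     (\<forall>v. W *v v = v \<longrightarrow> (\<forall>i j. v $ i = v $ j)) \<and>
     (\<forall>lam v. v \<noteq> 0 \<and> W *v v = lam *\<^sub>R v \<longrightarrow> lam = 1 \<or> (-1 < lam \<and> lam < 1))"

definition strongly_convex :: "real \<Rightarrow> ('a::real_inner \<Rightarrow> real) \<Rightarrow> bool" where
  "strongly_convex mu f \<longleftrightarrow> mu > 0 \<and> convex_on UNIV (\<lambda>x. f x - mu / 2 * (norm x)\<^sup>2)"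

definition lipschitz_grad :: "real \<Rightarrow> ('a::real_normed_vector \<Rightarrow> 'a) \<Rightarrow> bool" where
  "lipschitz_grad L g \<longleftrightarrow> L > 0 \<and> (\<forall>x y. norm (g x - g y) \<le> L * norm (x - y))"

end

theory Submission
  imports Defs
begin

text \<open>
  For a \<open>\<mu>\<close>-strongly convex function with \<open>L\<close>-Lipschitz gradient, co-coercivity
  \<open>\<mu>L/(\<mu>+L) \<parallel>x - y\<parallel>\<^sup>2 + \<parallel>\<nabla>f x - \<nabla>f y\<parallel>\<^sup>2/(\<mu>+L) \<le> \<langle>\<nabla>f x - \<nabla>f y, x - y\<rangle>\<close>
  makes a gradient step with \<open>\<alpha> < 1/L\<close> contract the distance to the minimiser by
  \<open>\<surd>(1 - 2\<alpha>\<gamma>)\<close>. The consensus step \<open>Z\<^sup>t\<close> is nonexpansive in the stacked norm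
  (\<open>W\<close> is doubly stochastic) and moves \<open>u\<^sup>\<star>\<close> by at most \<open>2\<parallel>u\<^sup>\<star>\<parallel>\<close>. So the error
  \<open>e\<^sub>k = \<parallel>y\<^sub>k - u\<^sup>\<star>\<parallel>\<close> satisfies \<open>e\<^sub>k\<^sub>+\<^sub>1 \<le> c (e\<^sub>k + 2\<parallel>u\<^sup>\<star>\<parallel>)\<close> with \<open>c = \<surd>(1 - \<nu>)\<close>, and
  since \<open>c (\<nu> + 2) \<le> 2\<close> the level \<open>e\<^sub>0 + 4\<parallel>u\<^sup>\<star>\<parallel>/\<nu>\<close> is never exceeded; the triangle
  inequality and nonexpansiveness of \<open>Z\<^sup>t\<close> then bound \<open>y\<^sub>k\<close> and \<open>x\<^sub>k\<close>.
\<close>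

lemma has_real_derivative_along_line:
  fixes f :: "'a::real_inner \<Rightarrow> real"
  assumes "GDERIV f (x + t *\<^sub>R d) :> D"
  shows "((\<lambda>s. f (x + s *\<^sub>R d)) has_real_derivative inner D d) (at t)"
proof -
  have "((\<lambda>s. x + s *\<^sub>R d) has_derivative (\<lambda>s. s *\<^sub>R d)) (at t)"
    by (auto intro!: derivative_eq_intros)
  from has_derivative_compose[OF this assms[unfolded gderiv_def]]
  have "((\<lambda>s. f (x + s *\<^sub>R d)) has_derivative (\<lambda>s. inner (s *\<^sub>R d) D)) (at t)"
    by (simp add: o_def)
  moreover have "(\<lambda>s. inner (s *\<^sub>R d) D) = (*) (inner D d)"
    by (auto simp: fun_eq_iff inner_commute)
  ultimately show ?thesis
    by (simp add: has_field_derivative_def)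
qed

lemma convex_on_gradient_inequality:
  fixes h :: "'a::real_inner \<Rightarrow> real"
  assumes convex: "convex_on UNIV h" and grad: "GDERIV h x :> D"
  shows "h x + inner D (y - x) \<le> h y"
proof -
  define \<phi> where "\<phi> = (\<lambda>t::real. h (x + t *\<^sub>R (y - x)))"
  have "convex_on UNIV \<phi>"
  proof (rule convex_onI)
    fix t a b :: real assume t: "0 < t" "t < 1"
    have "x + ((1 - t) *\<^sub>R a + t *\<^sub>R b) *\<^sub>R (y - x)
        = (1 - t) *\<^sub>R (x + a *\<^sub>R (y - x)) + t *\<^sub>R (x + b *\<^sub>R (y - x))"
      by (simp add: algebra_simps)
    then show "\<phi> ((1 - t) *\<^sub>R a + t *\<^sub>R b) \<le> (1 - t) * \<phi> a + t * \<phi> b"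
      unfolding \<phi>_def using convex_onD[OF convex, of t] t by simp
  qed auto
  moreover have "(\<phi> has_real_derivative inner D (y - x)) (at 0)"
    unfolding \<phi>_def by (rule has_real_derivative_along_line) (simp add: grad)
  ultimately have "\<phi> 1 - \<phi> 0 \<ge> inner D (y - x)"
    using convex_on_imp_above_tangent[of UNIV \<phi> 0 1] by simp
  then show ?thesis by (simp add: \<phi>_def)
qed

lemma GDERIV_eq_0_at_minimum:
  assumes "GDERIV f u :> D" and "\<And>z. f u \<le> f z"
  shows "D = 0"
proof -
  have "(\<lambda>h. inner h D) = (\<lambda>h. 0)"
    using assms by (intro has_derivative_local_min) (auto simp: gderiv_def)
  then show ?thesis by (metis inner_eq_zero_iff)
qed

lemma GDERIV_half_norm_squared:
  fixes z :: "'a::real_inner"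
  shows "GDERIV (\<lambda>z. c / 2 * (norm z)\<^sup>2) z :> c *\<^sub>R z"
  unfolding gderiv_def power2_norm_eq_inner
  by (auto intro!: derivative_eq_intros simp: inner_commute algebra_simps)

lemma half_norm_squared_expand:
  fixes a b :: "'a::real_inner"
  shows "c / 2 * (norm b)\<^sup>2 = c / 2 * (norm a)\<^sup>2 + c * inner a (b - a) + c / 2 * (norm (b - a))\<^sup>2"
  by (simp add: power2_norm_eq_inner inner_diff_left inner_diff_right inner_commute algebra_simps)

lemma strongly_convex_lower_bound:
  fixes f :: "'a::real_inner \<Rightarrow> real"
  assumes grad: "\<And>z. GDERIV f z :> g z" and sc: "strongly_convex mu f"
  shows "f a + inner (g a) (b - a) + mu / 2 * (norm (b - a))\<^sup>2 \<le> f b"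
proof -
  have "convex_on UNIV (\<lambda>x. f x - mu / 2 * (norm x)\<^sup>2)"
    using sc by (simp add: strongly_convex_def)
  from convex_on_gradient_inequality[OF this GDERIV_diff[OF grad GDERIV_half_norm_squared]]
  have "f a - mu / 2 * (norm a)\<^sup>2 + inner (g a - mu *\<^sub>R a) (b - a)
      \<le> f b - mu / 2 * (norm b)\<^sup>2" .
  with half_norm_squared_expand[of mu b a] show ?thesis
    unfolding inner_diff_left inner_scaleR_left by linarith
qed

lemma lipschitz_gradient_upper_bound:
  fixes f :: "'a::real_inner \<Rightarrow> real"
  assumes grad: "\<And>z. GDERIV f z :> g z" and lip: "lipschitz_grad L g"
  shows "f b \<le> f a + inner (g a) (b - a) + L / 2 * (norm (b - a))\<^sup>2"
proof -
  define d where "d = b - a"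
  define \<psi> where "\<psi> = (\<lambda>t. f (a + t *\<^sub>R d) - t * inner (g a) d - L / 2 * t\<^sup>2 * (norm d)\<^sup>2)"
  have deriv: "(\<psi> has_real_derivative inner (g (a + t *\<^sub>R d) - g a) d - L * t * (norm d)\<^sup>2) (at t)" for t
    unfolding \<psi>_def inner_diff_left
    by (rule derivative_eq_intros has_real_derivative_along_line grad refl | simp)+
  have "\<psi> 1 \<le> \<psi> 0"
  proof (rule DERIV_nonpos_imp_decreasing_open[of 0 1])
    fix t :: real assume t: "0 < t" "t < 1"
    have "inner (g (a + t *\<^sub>R d) - g a) d \<le> norm (g (a + t *\<^sub>R d) - g a) * norm d"
      by (rule norm_cauchy_schwarz)
    also have "\<dots> \<le> L * norm (t *\<^sub>R d) * norm d"
      using lip t unfolding lipschitz_grad_def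
      by (metis add_diff_cancel_left' mult_right_mono norm_ge_zero)
    also have "\<dots> = L * t * (norm d)\<^sup>2"
      using t by (simp add: power2_eq_square)
    finally show "\<exists>D. (\<psi> has_real_derivative D) (at t) \<and> D \<le> 0"
      using deriv by force
  next
    show "continuous_on {0..1} \<psi>"
      using deriv by (meson DERIV_isCont continuous_at_imp_continuous_on)
  qed simp
  then show ?thesis by (simp add: \<psi>_def d_def)
qed

lemma quadratic_bounds_modulus_le:
  fixes f :: "'a::real_inner \<Rightarrow> real" and x y :: 'a
  assumes lower: "\<And>a b. f a + inner (g a) (b - a) + mu / 2 * (norm (b - a))\<^sup>2 \<le> f b"
    and upper: "\<And>a b. f b \<le> f a + inner (g a) (b - a) + L / 2 * (norm (b - a))\<^sup>2"
    and "x \<noteq> y"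
  shows "mu \<le> L"
proof -
  have "mu / 2 * (norm (y - x))\<^sup>2 \<le> L / 2 * (norm (y - x))\<^sup>2"
    using lower[where a = x and b = y] upper[where a = x and b = y] by linarith
  then show ?thesis using \<open>x \<noteq> y\<close> by simp
qed

text \<open>The left-hand side is maximal at \<open>s = 1/M\<close>; for \<open>M = 0\<close> it is unbounded unless \<open>a = 0\<close>.\<close>

lemma le_mult_of_quadratic_bounds:
  fixes M a P :: real
  assumes "0 \<le> M" and "0 \<le> a" and bound: "\<And>s. 0 \<le> s \<Longrightarrow> 2 * s * a - M * s\<^sup>2 * a \<le> P"
  shows "a \<le> M * P"
proof (cases "M = 0")
  case True
  show ?thesis
  proof (rule ccontr)
    assume "\<not> ?thesis"
    then have "0 < a" using True by simp
    then show False
      using bound[of "(\<bar>P\<bar> + 1) / (2 * a)"] True by simp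
  qed
next
  case False
  then have "0 < M" using \<open>0 \<le> M\<close> by simp
  then have "2 * (1 / M) * a - M * (1 / M)\<^sup>2 * a = a / M"
    by (simp add: power2_eq_square field_simps)
  then have "a / M \<le> P"
    using bound[of "1 / M"] \<open>0 < M\<close> by simp
  then show ?thesis
    using \<open>0 < M\<close> by (simp add: field_simps)
qed

lemma convex_smooth_gradient_cocoercive:
  fixes h :: "'a::real_inner \<Rightarrow> real"
  assumes lower: "\<And>a b. h a + inner (dh a) (b - a) \<le> h b"
    and upper: "\<And>a b. h b \<le> h a + inner (dh a) (b - a) + M / 2 * (norm (b - a))\<^sup>2"
    and "0 \<le> M"
  shows "(norm (dh x - dh y))\<^sup>2 \<le> M * inner (dh x - dh y) (x - y)"
proof (rule le_mult_of_quadratic_bounds[OF \<open>0 \<le> M\<close>])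
  \<comment> \<open>compare \<open>h\<close> at the points reached by steps of length \<open>s\<close> along \<open>\<pm>(dh y - dh x)\<close>\<close>
  fix s :: real
  define G where "G = dh y - dh x"
  define z1 where "z1 = y - s *\<^sub>R G"
  define z2 where "z2 = x + s *\<^sub>R G"
  have at_z1: "h x + inner (dh x) (z1 - x) \<le> h y + inner (dh y) (z1 - y) + M / 2 * (norm (z1 - y))\<^sup>2"
    using lower[of x z1] upper[where a=y and b=z1] by linarith
  have at_z2: "h y + inner (dh y) (z2 - y) \<le> h x + inner (dh x) (z2 - x) + M / 2 * (norm (z2 - x))\<^sup>2"
    using lower[of y z2] upper[where a=x and b=z2] by linarith
  have "inner (dh x) (z1 - x) = inner (dh x) (y - x) - s * inner (dh x) G"
    and "inner (dh y) (z2 - y) = inner (dh y) (x - y) + s * inner (dh y) G"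
    and "inner (dh y) (z1 - y) = - s * inner (dh y) G"
    and "inner (dh x) (z2 - x) = s * inner (dh x) G"
    and "inner (dh x) (y - x) + inner (dh y) (x - y) = - inner (dh x - dh y) (x - y)"
    by (simp_all add: z1_def z2_def inner_diff_right inner_add_right inner_diff_left algebra_simps)
  moreover have "(norm (z1 - y))\<^sup>2 = s\<^sup>2 * (norm G)\<^sup>2" and "(norm (z2 - x))\<^sup>2 = s\<^sup>2 * (norm G)\<^sup>2"
    by (simp_all add: z1_def z2_def power_mult_distrib)
  moreover have "inner (dh y) G - inner (dh x) G = (norm G)\<^sup>2"
    by (simp add: G_def power2_norm_eq_inner inner_diff_left)
  ultimately have "2 * s * (norm G)\<^sup>2 - M * s\<^sup>2 * (norm G)\<^sup>2 \<le> inner (dh x - dh y) (x - y)"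
    using at_z1 at_z2 by (simp add: algebra_simps)
  then show "2 * s * (norm (dh x - dh y))\<^sup>2 - M * s\<^sup>2 * (norm (dh x - dh y))\<^sup>2
      \<le> inner (dh x - dh y) (x - y)"
    by (simp add: G_def norm_minus_commute)
qed simp

lemma norm_diff_squared:
  fixes a b :: "'a::real_inner"
  shows "(norm (a - b))\<^sup>2 = (norm a)\<^sup>2 - 2 * inner a b + (norm b)\<^sup>2"
  by (simp add: power2_norm_eq_inner inner_diff_left inner_diff_right inner_commute)

lemma quadratic_bounds_gradient_cocoercive:
  fixes f :: "'a::real_inner \<Rightarrow> real" and x y :: 'a
  assumes lower: "\<And>a b. f a + inner (g a) (b - a) + mu / 2 * (norm (b - a))\<^sup>2 \<le> f b"
    and upper: "\<And>a b. f b \<le> f a + inner (g a) (b - a) + L / 2 * (norm (b - a))\<^sup>2"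
    and "0 < mu"
  shows "mu * L / (mu + L) * (norm (x - y))\<^sup>2 + (norm (g x - g y))\<^sup>2 / (mu + L)
    \<le> inner (g x - g y) (x - y)"
proof (cases "x = y")
  case False
  then have "mu \<le> L" by (rule quadratic_bounds_modulus_le[OF lower upper])
  define h where "h = (\<lambda>z. f z - mu / 2 * (norm z)\<^sup>2)"
  define dh where "dh = (\<lambda>z. g z - mu *\<^sub>R z)"
  define N where "N = (norm (g x - g y))\<^sup>2"
  define c where "c = inner (g x - g y) (x - y)"
  define n where "n = (norm (x - y))\<^sup>2"
  have "h a + inner (dh a) (b - a) \<le> h b" for a b
    using lower[of a b] half_norm_squared_expand[of mu b a]
    unfolding h_def dh_def inner_diff_left inner_scaleR_left by linarith
  moreover have "h b \<le> h a + inner (dh a) (b - a) + (L - mu) / 2 * (norm (b - a))\<^sup>2" for a b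
    using upper[of b a] half_norm_squared_expand[of mu b a]
    unfolding h_def dh_def inner_diff_left inner_scaleR_left diff_divide_distrib left_diff_distrib
    by linarith
  ultimately have "(norm (dh x - dh y))\<^sup>2 \<le> (L - mu) * inner (dh x - dh y) (x - y)"
    by (rule convex_smooth_gradient_cocoercive) (use \<open>mu \<le> L\<close> in simp)
  moreover have "dh x - dh y = (g x - g y) - mu *\<^sub>R (x - y)"
    by (simp add: dh_def algebra_simps)
  ultimately have "N - 2 * mu * c + mu\<^sup>2 * n \<le> (L - mu) * (c - mu * n)"
    by (simp add: N_def c_def n_def norm_diff_squared[of "g x - g y"] power_mult_distrib
        inner_diff_left flip: power2_norm_eq_inner)
  then have "N + mu * L * n \<le> (mu + L) * c"
    by (simp add: algebra_simps power2_eq_square)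
  moreover have "0 < mu + L" using \<open>0 < mu\<close> \<open>mu \<le> L\<close> by simp
  ultimately have "mu * L / (mu + L) * n + N / (mu + L) \<le> c"
    by (simp add: add_divide_distrib[symmetric] pos_divide_le_eq algebra_simps)
  then show ?thesis by (simp add: N_def c_def n_def)
qed simp

lemma gradient_step_contraction:
  fixes f :: "'a::real_inner \<Rightarrow> real"
  assumes grad: "\<And>z. GDERIV f z :> g z" and sc: "strongly_convex mu f"
    and lip: "lipschitz_grad L g" and umin: "\<And>z. f u \<le> f z"
    and "0 < alpha" and "alpha < 1 / L"
  shows "(norm (x - alpha *\<^sub>R g x - u))\<^sup>2
    \<le> (1 - 2 * alpha * (mu * L / (mu + L))) * (norm (x - u))\<^sup>2"
proof -
  have "g u = 0" by (rule GDERIV_eq_0_at_minimum[OF grad umin])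
  show ?thesis
  proof (cases "x = u")
    case False
    note lower = strongly_convex_lower_bound[OF grad sc]
    note upper = lipschitz_gradient_upper_bound[OF grad lip]
    have "0 < mu" using sc by (simp add: strongly_convex_def)
    have "mu \<le> L" by (rule quadratic_bounds_modulus_le[OF lower upper False])
    define c where "c = inner (g x) (x - u)"
    define N where "N = (norm (g x))\<^sup>2"
    define n where "n = (norm (x - u))\<^sup>2"
    have cocoercive: "mu * L / (mu + L) * n + N / (mu + L) \<le> c"
      using quadratic_bounds_gradient_cocoercive[OF lower upper \<open>0 < mu\<close>, of x u] \<open>g u = 0\<close>
      by (simp add: c_def N_def n_def)
    have "alpha * L < 1"
      using \<open>alpha < 1 / L\<close> lip by (simp add: lipschitz_grad_def field_simps)
    moreover have "alpha * mu \<le> alpha * L"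
      using \<open>mu \<le> L\<close> \<open>0 < alpha\<close> by simp
    ultimately have "alpha * (mu + L) \<le> 2"
      by (simp add: distrib_left)
    then have "alpha * (alpha * (mu + L) * N) \<le> alpha * (2 * N)"
      using \<open>0 < alpha\<close> by (intro mult_left_mono mult_right_mono) (auto simp: N_def)
    then have "alpha\<^sup>2 * N \<le> 2 * alpha * (N / (mu + L))"
      using \<open>0 < mu\<close> \<open>mu \<le> L\<close> by (simp add: field_simps power2_eq_square)
    have "(norm (x - alpha *\<^sub>R g x - u))\<^sup>2 = n - 2 * alpha * c + alpha\<^sup>2 * N"
      using norm_diff_squared[of "x - u" "alpha *\<^sub>R g x"]
      by (simp add: c_def N_def n_def power_mult_distrib inner_commute algebra_simps)
    also have "\<dots> \<le> (1 - 2 * alpha * (mu * L / (mu + L))) * n"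
      using \<open>alpha\<^sup>2 * N \<le> _\<close> \<open>0 < alpha\<close> mult_left_mono[OF cocoercive, of "2 * alpha"]
      by (simp add: algebra_simps)
    finally show ?thesis by (simp add: n_def)
  qed (simp add: \<open>g u = 0\<close>)
qed

lemma snorm_L2: "snorm x = L2_set (\<lambda>i. norm (x i)) UNIV"
  by (simp add: snorm_def L2_set_def)

lemma snorm_nonneg: "0 \<le> snorm x"
  by (simp add: snorm_L2)

lemma snorm_add_le: "snorm (\<lambda>i. a i + b i) \<le> snorm a + snorm b"
  unfolding snorm_L2
  by (rule order_trans[OF _ L2_set_triangle_ineq]) (simp add: L2_set_mono norm_triangle_ineq)

lemma snorm_diff_le: "snorm (\<lambda>i. a i - b i) \<le> snorm a + snorm b"
  using snorm_add_le[of a "\<lambda>i. - b i"] by (simp add: snorm_def)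

lemma snorm_le_mult:
  assumes "\<And>i. norm (a i) \<le> c * norm (b i)" and "0 \<le> c"
  shows "snorm a \<le> c * snorm b"
proof -
  have "snorm a \<le> L2_set (\<lambda>i. c * norm (b i)) UNIV"
    unfolding snorm_L2 by (rule L2_set_mono) (use assms in auto)
  also have "\<dots> = c * snorm b"
    using \<open>0 \<le> c\<close> by (simp add: snorm_L2 L2_set_right_distrib)
  finally show ?thesis .
qed

lemma Zpow_add:
  fixes a b :: "'n::finite \<Rightarrow> 'a::real_vector"
  shows "Zpow W t (\<lambda>i. a i + b i) = (\<lambda>i. Zpow W t a i + Zpow W t b i)"
proof -
  have "Zop W (\<lambda>i. a i + b i) = (\<lambda>i. Zop W a i + Zop W b i)" for a b :: "'n \<Rightarrow> 'a"
    by (simp add: Zop_def scaleR_add_right sum.distrib)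
  then show ?thesis by (induction t) (simp_all add: Zpow_def)
qed

lemma snorm_Zop_le:
  assumes W: "mixing_matrix W"
  shows "snorm (Zop W x) \<le> snorm x"
proof -
  have nonneg: "\<And>i j. 0 \<le> W $ i $ j" and rows: "\<And>i. (\<Sum>j\<in>UNIV. W $ i $ j) = 1"
    and cols: "\<And>j. (\<Sum>i\<in>UNIV. W $ i $ j) = 1"
    using W by (auto simp: mixing_matrix_def)
  have "(norm (Zop W x i))\<^sup>2 \<le> (\<Sum>j\<in>UNIV. W $ i $ j * (norm (x j))\<^sup>2)" for i
  proof -
    have "norm (Zop W x i) \<le> (\<Sum>j\<in>UNIV. W $ i $ j * norm (x j))"
      unfolding Zop_def
      by (rule order_trans[OF norm_sum], rule sum_mono) (simp add: nonneg)
    then have "(norm (Zop W x i))\<^sup>2 \<le> (\<Sum>j\<in>UNIV. W $ i $ j * norm (x j))\<^sup>2"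
      by (simp add: power_mono)
    also have "\<dots> \<le> (\<Sum>j\<in>UNIV. W $ i $ j * (norm (x j))\<^sup>2)"
      using convex_on_sum[OF _ _ convex_power2 rows, where y = "\<lambda>j. norm (x j)"] nonneg by simp
    finally show ?thesis .
  qed
  then have "(\<Sum>i\<in>UNIV. (norm (Zop W x i))\<^sup>2) \<le> (\<Sum>i\<in>UNIV. \<Sum>j\<in>UNIV. W $ i $ j * (norm (x j))\<^sup>2)"
    by (rule sum_mono)
  also have "\<dots> = (\<Sum>j\<in>UNIV. (norm (x j))\<^sup>2)"
    by (subst sum.swap) (simp add: cols flip: sum_distrib_right)
  finally show ?thesis unfolding snorm_def by simp
qed

lemma snorm_Zpow_le:
  assumes "mixing_matrix W"
  shows "snorm (Zpow W t x) \<le> snorm x"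
  by (induction t) (auto simp: Zpow_def intro: order_trans[OF snorm_Zop_le[OF assms]])

lemma snorm_Zpow_diff_le:
  assumes W: "mixing_matrix W"
  shows "snorm (\<lambda>i. Zpow W t y i - u i) \<le> snorm (\<lambda>i. y i - u i) + 2 * snorm u"
proof -
  have "(\<lambda>i. Zpow W t y i - u i) = (\<lambda>i. Zpow W t (\<lambda>i. y i - u i) i + (Zpow W t u i - u i))"
    using Zpow_add[of W t "\<lambda>i. y i - u i" u] by (simp add: fun_eq_iff)
  then have "snorm (\<lambda>i. Zpow W t y i - u i)
      \<le> snorm (Zpow W t (\<lambda>i. y i - u i)) + snorm (\<lambda>i. Zpow W t u i - u i)"
    by (simp add: snorm_add_le)
  also have "\<dots> \<le> snorm (\<lambda>i. y i - u i) + (snorm (Zpow W t u) + snorm u)"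
    by (intro add_mono snorm_Zpow_le[OF W] snorm_diff_le)
  also have "\<dots> \<le> snorm (\<lambda>i. y i - u i) + 2 * snorm u"
    using snorm_Zpow_le[OF W, of t u] by simp
  finally show ?thesis .
qed

lemma affine_recurrence_bound:
  fixes e :: "nat \<Rightarrow> real"
  assumes step: "\<And>k. e (Suc k) \<le> c * e k + b"
    and "0 \<le> c" "c \<le> 1" "0 \<le> e 0" "0 \<le> B" and invariant: "c * B + b \<le> B"
  shows "e k \<le> e 0 + B"
proof (induction k)
  case (Suc k)
  have "e (Suc k) \<le> c * (e 0 + B) + b"
    using step[of k] mult_left_mono[OF Suc \<open>0 \<le> c\<close>] by linarith
  also have "\<dots> \<le> e 0 + B"
    using mult_left_le_one_le[OF \<open>0 \<le> e 0\<close> \<open>0 \<le> c\<close> \<open>c \<le> 1\<close>] invariant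
    by (simp add: distrib_left)
  finally show ?case .
qed (simp add: \<open>0 \<le> B\<close>)

lemma sqrt_one_minus_contraction_le:
  "sqrt (max 0 (1 - nu)) * (nu + 2) \<le> 2"
proof (cases "nu < 1")
  case True
  define c where "c = sqrt (1 - nu)"
  have "0 \<le> c" and "c\<^sup>2 = 1 - nu"
    using True by (auto simp: c_def)
  have "sqrt (max 0 (1 - nu)) * (nu + 2) = c * (3 - c\<^sup>2)"
    using True unfolding \<open>c\<^sup>2 = 1 - nu\<close> by (simp add: c_def)
  also have "\<dots> = 2 - (1 - c)\<^sup>2 * (2 + c)"
    by (simp add: algebra_simps power2_eq_square)
  also have "\<dots> \<le> 2"
    using \<open>0 \<le> c\<close> by simp
  finally show ?thesis .
qed simp

lemma contracting_recurrence_bound: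
  fixes e :: "nat \<Rightarrow> real"
  assumes step: "\<And>k. e (Suc k) \<le> sqrt (max 0 (1 - nu)) * (e k + 2 * U)"
    and "0 < nu" "0 \<le> U" "0 \<le> e 0"
  shows "e k \<le> e 0 + 4 * U / nu"
proof (rule affine_recurrence_bound)
  let ?c = "sqrt (max 0 (1 - nu))"
  show "e (Suc k) \<le> ?c * e k + 2 * ?c * U" for k
    using step[of k] by (simp add: algebra_simps)
  have "?c * (4 * U / nu) + 2 * ?c * U = ?c * (nu + 2) * (2 * U / nu)"
    using \<open>0 < nu\<close> by (simp add: field_simps)
  also have "\<dots> \<le> 2 * (2 * U / nu)"
    using sqrt_one_minus_contraction_le[of nu] assms by (intro mult_right_mono) simp_all
  finally show "?c * (4 * U / nu) + 2 * ?c * U \<le> 4 * U / nu" by simp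
qed (use assms in auto)

lemma near_dgd_step_error:
  fixes W :: "real^'n^'n" and f :: "'n \<Rightarrow> 'a::real_inner \<Rightarrow> real" and y :: "'n \<Rightarrow> 'a"
    and t :: nat
  assumes W: "mixing_matrix W"
    and grad: "\<And>i z. GDERIV (f i) z :> g i z"
    and sc: "\<And>i. strongly_convex (mu i) (f i)"
    and lip: "\<And>i. lipschitz_grad (Lc i) (g i)"
    and umin: "\<And>i z. f i (u i) \<le> f i z"
    and "0 < alpha" and alpha_lt: "\<And>i. alpha < 1 / Lc i"
    and gamma_le: "\<And>i. gamma \<le> mu i * Lc i / (mu i + Lc i)"
  defines "x \<equiv> Zpow W t y"
  shows "snorm (\<lambda>i. x i - alpha *\<^sub>R g i (x i) - u i)
    \<le> sqrt (max 0 (1 - 2 * alpha * gamma)) * (snorm (\<lambda>i. y i - u i) + 2 * snorm u)"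
proof -
  let ?c = "sqrt (max 0 (1 - 2 * alpha * gamma))"
  have "norm (x i - alpha *\<^sub>R g i (x i) - u i) \<le> ?c * norm (x i - u i)" for i
  proof -
    have "(norm (x i - alpha *\<^sub>R g i (x i) - u i))\<^sup>2
        \<le> (1 - 2 * alpha * (mu i * Lc i / (mu i + Lc i))) * (norm (x i - u i))\<^sup>2"
      by (rule gradient_step_contraction[OF grad sc lip umin \<open>0 < alpha\<close> alpha_lt])
    also have "\<dots> \<le> ?c\<^sup>2 * (norm (x i - u i))\<^sup>2"
    proof (rule mult_right_mono)
      have "alpha * gamma \<le> alpha * (mu i * Lc i / (mu i + Lc i))"
        using \<open>0 < alpha\<close> by (intro mult_left_mono gamma_le) simp
      then show "1 - 2 * alpha * (mu i * Lc i / (mu i + Lc i)) \<le> ?c\<^sup>2"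
        by simp
    qed simp
    also have "\<dots> = (?c * norm (x i - u i))\<^sup>2"
      by (simp only: power_mult_distrib)
    finally show ?thesis
      by (rule power2_le_imp_le) simp
  qed
  then have "snorm (\<lambda>i. x i - alpha *\<^sub>R g i (x i) - u i) \<le> ?c * snorm (\<lambda>i. x i - u i)"
    by (rule snorm_le_mult) simp
  also have "\<dots> \<le> ?c * (snorm (\<lambda>i. y i - u i) + 2 * snorm u)"
    unfolding x_def by (intro mult_left_mono snorm_Zpow_diff_le W) simp
  finally show ?thesis .
qed

theorem lemma3:
  fixes W :: "real^'n^'n"
    and f :: "'n \<Rightarrow> 'a::euclidean_space \<Rightarrow> real"
    and g :: "'n \<Rightarrow> 'a \<Rightarrow> 'a"
    and mu Lc :: "'n \<Rightarrow> real"
    and u :: "'n \<Rightarrow> 'a"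
    and alpha :: real
    and s0 :: 'a
    and tk :: "nat \<Rightarrow> nat"
    and x y :: "nat \<Rightarrow> 'n \<Rightarrow> 'a"
  assumes W: "mixing_matrix W"
    and grad: "\<And>i z. GDERIV (f i) z :> g i z"
    and sc: "\<And>i. strongly_convex (mu i) (f i)"
    and lip: "\<And>i. lipschitz_grad (Lc i) (g i)"
    and umin: "\<And>i z. f i (u i) \<le> f i z"
    and alpha_pos: "0 < alpha"
    and alpha_lt: "alpha < 1 / (MAX i. Lc i)"
    and tk_pos: "\<And>k. tk k \<ge> 1"
    and y0: "y 0 = (\<lambda>i. s0)"
    and xk: "\<And>k. x k = Zpow W (tk k) (y k)"
    and yk: "\<And>k. y (Suc k) = (\<lambda>i. x k i - alpha *\<^sub>R g i (x k i))"
  shows "\<forall>k\<ge>1.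
     (let gamma = (MIN i. mu i * Lc i / (mu i + Lc i));
          nu = 2 * alpha * gamma;
          D = snorm (\<lambda>i. y 0 i - u i) + (nu + 4) / nu * snorm u
      in snorm (x k) \<le> D \<and> snorm (y k) \<le> D)"
proof -
  \<comment> \<open>the bound holds for every \<open>k\<close>, any initial point and any \<open>t(k) \<ge> 0\<close>\<close>
  define gamma where "gamma = (MIN i. mu i * Lc i / (mu i + Lc i))"
  define nu where "nu = 2 * alpha * gamma"
  define U where "U = snorm u"
  define e where "e = (\<lambda>k. snorm (\<lambda>i. y k i - u i))"
  have gamma_le: "gamma \<le> mu i * Lc i / (mu i + Lc i)" for i
    unfolding gamma_def by (rule Min_le) auto
  have "0 < gamma"
    unfolding gamma_def using sc lip
    by (auto simp: strongly_convex_def lipschitz_grad_def intro!: divide_pos_pos add_pos_pos)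
  then have "0 < nu"
    using alpha_pos by (simp add: nu_def)
  have alpha_lt_i: "alpha < 1 / Lc i" for i
  proof -
    have "Lc i \<le> (MAX i. Lc i)" by (rule Max_ge) auto
    then have "1 / (MAX i. Lc i) \<le> 1 / Lc i"
      using lip[of i] by (simp add: frac_le lipschitz_grad_def)
    then show ?thesis using alpha_lt by linarith
  qed
  have "e (Suc k) \<le> sqrt (max 0 (1 - nu)) * (e k + 2 * U)" for k
    unfolding e_def yk xk nu_def U_def
    by (rule near_dgd_step_error[OF W grad sc lip umin alpha_pos alpha_lt_i gamma_le])
  then have e_bound: "e k \<le> e 0 + 4 * U / nu" for k
    by (rule contracting_recurrence_bound)
      (use \<open>0 < nu\<close> in \<open>simp_all add: e_def U_def snorm_nonneg\<close>)
  have y_bound: "snorm (y k) \<le> e 0 + (nu + 4) / nu * U" for k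
  proof -
    have "snorm (y k) \<le> e k + U"
      using snorm_add_le[of "\<lambda>i. y k i - u i" u] by (simp add: e_def U_def)
    also have "\<dots> \<le> e 0 + (nu + 4) / nu * U"
      using e_bound[of k] \<open>0 < nu\<close> by (simp add: field_simps)
    finally show ?thesis .
  qed
  show ?thesis
    using y_bound order_trans[OF snorm_Zpow_le[OF W] y_bound]
    by (simp add: Let_def xk e_def U_def flip: gamma_def nu_def)
qed

end
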